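(* Let $X,A^0,\dots,A^{d-1}\in\mathcal{M}_D(\mathbb{C})$ and for $N\ge1$ let $|\psi_N(X,A)\rangle=\sum_{i_1,\dots,i_N=0}^{d-1}\mathrm{Tr}[XA^{i_1}A^{i_2}\cdots A^{i_N}]\,|i_1i_2\cdots i_N\rangle$. Then $|\psi_N(X,A)\rangle$ is translationally invariant for every $N\ge1$ if and only if $$\mathrm{Tr}\big[X[a,b]\big]=0\quad\text{for all }a,b\in\mathrm{Alg}(\{A^i\}).$$
   Context: A state $|\psi\rangle\in(\mathbb{C}^d)^{\otimes N}$ is translationally invariant if $T|\psi\rangle=|\psi\rangle$, where $T|i_1i_2\cdots i_N\rangle=|i_2\cdots i_Ni_1\rangle$ is the cyclic shift. $[a,b]=ab-ba$. $\mathrm{Alg}(\{A^i\})$ is the linear span of all finite products $A^{i_1}\cdots A^{i_k}$ with $k\ge1$. *)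

theory Defs
  imports "HOL-Analysis.Analysis"
begin

text \<open>D x D complex matrices are modelled as complex^'D^'D (D = CARD('D));
  matrix product is **, trace is the HOL-Analysis trace.
  The family A^0,...,A^(d-1) is a function A :: nat => matrix, only i < d used.\<close>

definition cscale :: "complex \<Rightarrow> complex^'n^'m \<Rightarrow> complex^'n^'m" where
  "cscale c M = (\<chi> i j. c * M$i$j)"

definition wprod :: "(nat \<Rightarrow> complex^'n^'n) \<Rightarrow> nat list \<Rightarrow> complex^'n^'n" where
  "wprod A w = foldr (\<lambda>i M. A i ** M) w (mat 1)"

definition comm :: "complex^'n^'n \<Rightarrow> complex^'n^'n \<Rightarrow> complex^'n^'n" where
  "comm a b = a ** b - b ** a"

text \<open>Alg({A^i}): linear span of all finite products of length >= 1.\<close>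
definition Alg :: "nat \<Rightarrow> (nat \<Rightarrow> complex^'n^'n) \<Rightarrow> (complex^'n^'n) set" where
  "Alg d A = {M. \<exists>ps :: (complex \<times> nat list) list.
      (\<forall>(c, w) \<in> set ps. w \<noteq> [] \<and> set w \<subseteq> {..<d}) \<and>
      M = sum_list (map (\<lambda>(c, w). cscale c (wprod A w)) ps)}"

text \<open>A state in (C^d)^{\<otimes>N} is represented by its coefficient function on basis
  words |i_1...i_N>; psi_N(X,A) has coefficient Tr[X A^(i_1)...A^(i_N)] on words of
  length N over {0..<d} and 0 elsewhere.\<close>
definition psi :: "nat \<Rightarrow> complex^'n^'n \<Rightarrow> (nat \<Rightarrow> complex^'n^'n) \<Rightarrow> nat \<Rightarrow> nat list \<Rightarrow> complex" where
  "psi d X A N = (\<lambda>w. if length w = N \<and> set w \<subseteq> {..<d} then trace (X ** wprod A w) else 0)"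

text \<open>Cyclic shift T|i_1 i_2...i_N> = |i_2...i_N i_1>, extended linearly:
  the coefficient of (T psi) at u is the coefficient of psi at the word w with rotate1 w = u.\<close>
definition cyc_shift :: "(nat list \<Rightarrow> complex) \<Rightarrow> nat list \<Rightarrow> complex" where
  "cyc_shift \<psi> = (\<lambda>u. \<psi> (if u = [] then [] else last u # butlast u))"

definition trans_inv :: "(nat list \<Rightarrow> complex) \<Rightarrow> bool" where
  "trans_inv \<psi> \<longleftrightarrow> cyc_shift \<psi> = \<psi>"

end

theory Submission
  imports Defs
begin

text \<open>Translation invariance of every \<open>\<psi>\<^sub>N\<close> says exactly that moving the first letter of a
  word to its end does not change \<open>Tr[X A\<^sup>w]\<close>. Iterating, \<open>Tr[X A\<^sup>u A\<^sup>v] = Tr[X A\<^sup>v A\<^sup>u]\<close>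
  for all words \<open>u, v\<close>, i.e. \<open>Tr[X [a, b]] = 0\<close> for products \<open>a, b\<close> of generators, and
  this extends to \<open>Alg({A\<^sup>i})\<close> because the condition is bilinear in \<open>a\<close> and \<open>b\<close>.
  Conversely, a single letter and the remaining word are both elements of the algebra.\<close>

lemma wprod_append: "wprod A (u @ v) = wprod A u ** wprod A v"
  by (induction u) (simp_all add: wprod_def matrix_mul_assoc)

lemma cscale_one: "cscale 1 M = M"
  by (simp add: cscale_def vec_eq_iff)

lemma cscale_matrix_mult_left: "cscale c M ** N = cscale c (M ** N)"
  by (simp add: cscale_def matrix_matrix_mult_def vec_eq_iff sum_distrib_left mult.assoc)

lemma cscale_matrix_mult_right: "M ** cscale c N = cscale c (M ** N)"
  by (simp add: cscale_def matrix_matrix_mult_def vec_eq_iff sum_distrib_left mult.left_commute)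

lemma trace_cscale: "trace (cscale c M) = c * trace M"
  by (simp add: trace_def cscale_def sum_distrib_left)

lemma matrix_add_rdistrib: "(M + N) ** (P :: 'a::semiring_1^'p^'n) = M ** P + N ** P"
  by (simp add: matrix_matrix_mult_def vec_eq_iff sum.distrib distrib_right)

lemma matrix_diff_ldistrib: "(M :: 'a::ring_1^'n^'m) ** (N - P) = M ** N - M ** P"
  by (simp add: matrix_matrix_mult_def vec_eq_iff sum_subtractf right_diff_distrib)

lemma trace_comm_eq_0_iff:
  "trace (X ** comm a b) = 0 \<longleftrightarrow> trace (X ** (a ** b)) = trace (X ** (b ** a))"
  by (simp add: comm_def matrix_diff_ldistrib trace_sub)

lemma wprod_in_Alg:
  assumes "w \<noteq> []" "set w \<subseteq> {..<d}"
  shows "wprod A w \<in> Alg d A"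
  unfolding Alg_def using assms
  by (intro CollectI exI[of _ "[(1, w)]"]) (simp add: cscale_one)

lemma Alg_induct [consumes 1, case_names zero add scale word]:
  assumes "M \<in> Alg d A"
    and "P 0"
    and "\<And>a b. P a \<Longrightarrow> P b \<Longrightarrow> P (a + b)"
    and "\<And>c a. P a \<Longrightarrow> P (cscale c a)"
    and "\<And>w. w \<noteq> [] \<Longrightarrow> set w \<subseteq> {..<d} \<Longrightarrow> P (wprod A w)"
  shows "P M"
proof -
  obtain ps :: "(complex \<times> nat list) list" where
    words: "\<forall>(c, w) \<in> set ps. w \<noteq> [] \<and> set w \<subseteq> {..<d}"
    and M: "M = sum_list (map (\<lambda>(c, w). cscale c (wprod A w)) ps)"
    using assms(1) unfolding Alg_def by blast
  from words have "P (sum_list (map (\<lambda>(c, w). cscale c (wprod A w)) ps))"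
    by (induction ps) (auto simp: assms(2-5))
  with M show ?thesis by simp
qed

lemma trace_swap_Alg_left:
  assumes "a \<in> Alg d A"
    and "\<And>w. w \<noteq> [] \<Longrightarrow> set w \<subseteq> {..<d} \<Longrightarrow>
           trace (X ** (wprod A w ** b)) = trace (X ** (b ** wprod A w))"
  shows "trace (X ** (a ** b)) = trace (X ** (b ** a))"
  using assms(1)
proof (induction rule: Alg_induct)
  case zero
  show ?case by simp
next
  case (add a a')
  then show ?case by (simp add: matrix_add_rdistrib matrix_add_ldistrib trace_add)
next
  case (scale c a)
  then show ?case by (simp add: cscale_matrix_mult_left cscale_matrix_mult_right trace_cscale)
next
  case (word w)
  then show ?case by (rule assms(2))
qed

lemma trace_swap_Alg:
  assumes "a \<in> Alg d A" "b \<in> Alg d A"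
    and words: "\<And>u v. u \<noteq> [] \<Longrightarrow> v \<noteq> [] \<Longrightarrow> set u \<subseteq> {..<d} \<Longrightarrow> set v \<subseteq> {..<d} \<Longrightarrow>
           trace (X ** (wprod A u ** wprod A v)) = trace (X ** (wprod A v ** wprod A u))"
  shows "trace (X ** (a ** b)) = trace (X ** (b ** a))"
proof -
  have word_a: "trace (X ** (wprod A v ** a)) = trace (X ** (a ** wprod A v))"
    if "v \<noteq> []" "set v \<subseteq> {..<d}" for v
    using trace_swap_Alg_left[OF \<open>a \<in> Alg d A\<close>] words that by metis
  show ?thesis
    using trace_swap_Alg_left[OF \<open>b \<in> Alg d A\<close>, of X a] word_a by metis
qed

lemma cyc_shift_snoc: "cyc_shift \<psi> (v @ [j]) = \<psi> (j # v)"
  by (simp add: cyc_shift_def)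

lemma trans_inv_iff_rotate_letter: "trans_inv \<psi> \<longleftrightarrow> (\<forall>j v. \<psi> (j # v) = \<psi> (v @ [j]))"
proof
  assume "trans_inv \<psi>"
  then show "\<forall>j v. \<psi> (j # v) = \<psi> (v @ [j])"
    by (metis trans_inv_def cyc_shift_snoc)
next
  assume rot: "\<forall>j v. \<psi> (j # v) = \<psi> (v @ [j])"
  have "cyc_shift \<psi> u = \<psi> u" for u
  proof (cases u rule: rev_cases)
    case Nil
    then show ?thesis by (simp add: cyc_shift_def)
  next
    case (snoc v j)
    then show ?thesis using rot by (simp add: cyc_shift_snoc)
  qed
  then show "trans_inv \<psi>"
    by (simp add: trans_inv_def fun_eq_iff)
qed

lemma all_trans_inv_psi_iff:
  "(\<forall>N\<ge>1. trans_inv (psi d X A N)) \<longleftrightarrow>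
   (\<forall>j<d. \<forall>v. set v \<subseteq> {..<d} \<longrightarrow>
      trace (X ** wprod A (j # v)) = trace (X ** wprod A (v @ [j])))"
  (is "?inv \<longleftrightarrow> ?rot")
proof -
  have "psi d X A N (j # v) = psi d X A N (v @ [j]) \<longleftrightarrow>
        (length v + 1 = N \<and> j < d \<and> set v \<subseteq> {..<d} \<longrightarrow>
           trace (X ** wprod A (j # v)) = trace (X ** wprod A (v @ [j])))" for N j v
    by (auto simp: psi_def)
  then have "trans_inv (psi d X A N) \<longleftrightarrow>
             (\<forall>j v. length v + 1 = N \<and> j < d \<and> set v \<subseteq> {..<d} \<longrightarrow>
                trace (X ** wprod A (j # v)) = trace (X ** wprod A (v @ [j])))" for N
    by (simp add: trans_inv_iff_rotate_letter)
  then show ?thesis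
    by (metis le_add2)
qed

lemma trace_rotate_word:
  assumes letter: "\<And>j v. j < d \<Longrightarrow> set v \<subseteq> {..<d} \<Longrightarrow>
           trace (X ** wprod A (j # v)) = trace (X ** wprod A (v @ [j]))"
    and "set u \<subseteq> {..<d}" "set v \<subseteq> {..<d}"
  shows "trace (X ** wprod A (u @ v)) = trace (X ** wprod A (v @ u))"
  using assms(2,3)
proof (induction u arbitrary: v)
  case Nil
  then show ?case by simp
next
  case (Cons j u)
  have "trace (X ** wprod A ((j # u) @ v)) = trace (X ** wprod A (u @ v @ [j]))"
    using letter[of j "u @ v"] Cons.prems by simp
  also have "\<dots> = trace (X ** wprod A ((v @ [j]) @ u))"
    using Cons.IH[of "v @ [j]"] Cons.prems by simp
  finally show ?case by simp
qed

theorem lemma3: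
  fixes X :: "complex^'D^'D" and A :: "nat \<Rightarrow> complex^'D^'D" and d :: nat
  shows "(\<forall>N\<ge>1. trans_inv (psi d X A N)) \<longleftrightarrow>
         (\<forall>a\<in>Alg d A. \<forall>b\<in>Alg d A. trace (X ** comm a b) = 0)"
  unfolding all_trans_inv_psi_iff trace_comm_eq_0_iff
proof (intro iffI ballI allI impI)
  fix a b
  assume "\<forall>j<d. \<forall>v. set v \<subseteq> {..<d} \<longrightarrow>
            trace (X ** wprod A (j # v)) = trace (X ** wprod A (v @ [j]))"
    and "a \<in> Alg d A" "b \<in> Alg d A"
  then show "trace (X ** (a ** b)) = trace (X ** (b ** a))"
    using trace_swap_Alg trace_rotate_word by (metis wprod_append)
next
  fix j v
  assume Alg: "\<forall>a\<in>Alg d A. \<forall>b\<in>Alg d A. trace (X ** (a ** b)) = trace (X ** (b ** a))"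
    and "j < d" "set v \<subseteq> {..<d}"
  then have "v \<noteq> [] \<Longrightarrow> trace (X ** (wprod A [j] ** wprod A v)) = trace (X ** (wprod A v ** wprod A [j]))"
    using wprod_in_Alg[of "[j]" d A] wprod_in_Alg[of v d A] by simp
  then show "trace (X ** wprod A (j # v)) = trace (X ** wprod A (v @ [j]))"
    by (cases "v = []") (simp_all flip: wprod_append)
qed

end
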